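(* For every game $G$, the comma category $(\mathbf{FinGame}_{emb}/G)_{\mathbf{Games}_{emb}}$ has the joint embedding property and the amalgamation property.
   Context: A game tree is $T\subseteq M^{<\omega}$ (some set $M$) closed under initial segments such that every $t\in T$ has an extension $t^\frown x\in T$; $|t|$ is the length, $t\restriction k$ the initial segment of length $k$. $\mathrm{Run}(T)=\{R\in M^\omega:R\restriction n\in T\ \forall n\}$. A game is $(T,A)$ with $A\subseteq\mathrm{Run}(T)$; finite if $\mathrm{Run}(T)$ is finite. A chronological map $f\colon T_1\to T_2$ satisfies $|f(t)|=|t|$, $f(t\restriction k)=f(t)\restriction k$, inducing $\bar f$ on runs via $\bar f(R)\restriction n=f(R\restriction n)$. A game embedding $(T_1,A_1)\to(T_2,A_2)$ is an injective chronological $f$ with $\bar f(R)\in A_2\iff R\in A_1$ for all runs $R$. $\mathbf{Games}_{emb}$ is the category of games and game embeddings, $\mathbf{FinGame}_{emb}$ its full subcategory of finite games. The comma category $(\mathbf{FinGame}_{emb}/G)_{\mathbf{Games}_{emb}}$ has as objects the game embeddings $x\colon C\to G$ with $C$ finite, and as morphisms from $x_C\colon C\to G$ to $x_D\colon D\to G$ the game embeddings $h\colon C\to D$ with $x_D\circ h=x_C$. Joint embedding property: any two objects admit morphisms into a common object. Amalgamation property: for morphisms $a\colon P\to Q$, $a'\colon P\to Q'$ there are morphisms $b\colon Q\to R$, $b'\colon Q'\to R$ with $b\circ a=b'\circ a'$. *)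

theory Defs
  imports Main
begin

text \<open>Sequences in M^{<omega} are lists; runs in M^omega are functions nat => M.
  A game is a pair (T, A) of a tree and a set of runs.\<close>

type_synonym 'a game = "'a list set \<times> (nat \<Rightarrow> 'a) set"

definition game_tree :: "'a list set \<Rightarrow> bool" where
  "game_tree T \<longleftrightarrow>
     (\<forall>t\<in>T. \<forall>k. take k t \<in> T) \<and> (\<forall>t\<in>T. \<exists>x. t @ [x] \<in> T)"

definition run_prefix :: "(nat \<Rightarrow> 'a) \<Rightarrow> nat \<Rightarrow> 'a list" where
  "run_prefix R n = map R [0..<n]"

definition Run :: "'a list set \<Rightarrow> (nat \<Rightarrow> 'a) set" where
  "Run T = {R. \<forall>n. run_prefix R n \<in> T}"

definition is_game :: "'a game \<Rightarrow> bool" where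
  "is_game G \<longleftrightarrow> game_tree (fst G) \<and> snd G \<subseteq> Run (fst G)"

definition finite_game :: "'a game \<Rightarrow> bool" where
  "finite_game G \<longleftrightarrow> is_game G \<and> finite (Run (fst G))"

definition chronological :: "'a list set \<Rightarrow> 'b list set \<Rightarrow> ('a list \<Rightarrow> 'b list) \<Rightarrow> bool" where
  "chronological T1 T2 f \<longleftrightarrow>
     (\<forall>t\<in>T1. f t \<in> T2 \<and> length (f t) = length t \<and>
              (\<forall>k. f (take k t) = take k (f t)))"

text \<open>Induced map on runs: (fbar f R) restricted to n equals f (R restricted to n).\<close>
definition fbar :: "('a list \<Rightarrow> 'b list) \<Rightarrow> (nat \<Rightarrow> 'a) \<Rightarrow> nat \<Rightarrow> 'b" where
  "fbar f R n = f (run_prefix R (Suc n)) ! n"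

definition game_emb :: "'a game \<Rightarrow> 'b game \<Rightarrow> ('a list \<Rightarrow> 'b list) \<Rightarrow> bool" where
  "game_emb G1 G2 f \<longleftrightarrow>
     inj_on f (fst G1) \<and> chronological (fst G1) (fst G2) f \<and>
     (\<forall>R\<in>Run (fst G1). fbar f R \<in> snd G2 \<longleftrightarrow> R \<in> snd G1)"

definition comma_obj :: "'a game \<Rightarrow> 'c game \<Rightarrow> ('c list \<Rightarrow> 'a list) \<Rightarrow> bool" where
  "comma_obj G C x \<longleftrightarrow> finite_game C \<and> game_emb C G x"

definition comma_mor ::
  "'a game \<Rightarrow> 'c game \<Rightarrow> ('c list \<Rightarrow> 'a list) \<Rightarrow> 'd game \<Rightarrow> ('d list \<Rightarrow> 'a list)
    \<Rightarrow> ('c list \<Rightarrow> 'd list) \<Rightarrow> bool" where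
  "comma_mor G C xC D xD h \<longleftrightarrow>
     comma_obj G C xC \<and> comma_obj G D xD \<and> game_emb C D h \<and>
     (\<forall>t\<in>fst C. xD (h t) = xC t)"

end

theory Submission
  imports Defs
begin

text \<open>Since every object of the comma category embeds into \<open>G\<close>, two objects \<open>C\<close> and \<open>D\<close>
  jointly embed into the subgame of \<open>G\<close> carried by the union of their images. Every run of this
  union of subtrees is a run of one of the two images, hence the image of one of the finitely many
  runs of \<open>C\<close> or \<open>D\<close>; so the subgame is again finite. Amalgamation is the special case where
  \<open>C\<close> and \<open>D\<close> are the targets of two morphisms out of \<open>P\<close>: the legs into the common subgame are
  the structure maps themselves, which already agree on \<open>P\<close> because both morphisms commute
  over \<open>G\<close>.\<close>

definition restrict_game :: "'a game \<Rightarrow> 'a list set \<Rightarrow> 'a game" where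
  "restrict_game G T = (T, snd G \<inter> Run T)"

lemma length_run_prefix [simp]: "length (run_prefix R n) = n"
  by (simp add: run_prefix_def)

lemma take_run_prefix: "take k (run_prefix R n) = run_prefix R (min k n)"
  by (simp add: run_prefix_def take_map min_def)

lemma nth_run_prefix: "i < n \<Longrightarrow> run_prefix R n ! i = R i"
  by (simp add: run_prefix_def)

lemma fbar_id [simp]: "fbar id R = R"
  by (rule ext) (simp add: fbar_def nth_run_prefix)

lemma run_prefix_fbar:
  assumes ch: "chronological T1 T2 f" and R: "R \<in> Run T1"
  shows "run_prefix (fbar f R) n = f (run_prefix R n)"
proof (rule nth_equalityI)
  have inT: "\<And>m. run_prefix R m \<in> T1" using R by (simp add: Run_def)
  show "length (run_prefix (fbar f R) n) = length (f (run_prefix R n))"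
    using ch inT by (simp add: chronological_def)
  fix i assume "i < length (run_prefix (fbar f R) n)"
  hence i: "i < n" by simp
  have "run_prefix (fbar f R) n ! i = f (run_prefix R (Suc i)) ! i"
    using i by (simp add: nth_run_prefix fbar_def)
  also have "run_prefix R (Suc i) = take (Suc i) (run_prefix R n)"
    using i by (simp add: take_run_prefix min_def)
  also have "f (take (Suc i) (run_prefix R n)) = take (Suc i) (f (run_prefix R n))"
    using ch inT by (simp add: chronological_def)
  finally show "run_prefix (fbar f R) n ! i = f (run_prefix R n) ! i" by simp
qed

lemma fbar_in_Run_image:
  assumes "chronological T1 T2 f" and "R \<in> Run T1"
  shows "fbar f R \<in> Run (f ` T1)"
  using assms by (auto simp: Run_def run_prefix_fbar)

text \<open>Conversely, a run all of whose prefixes lie in the image is the image of a run: by injectivity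
  the preimages of its prefixes are themselves prefixes of one another.\<close>
lemma Run_image_subset:
  assumes gt: "game_tree T1" and ch: "chronological T1 T2 f" and inj: "inj_on f T1"
    and R: "R \<in> Run (f ` T1)"
  shows "R \<in> fbar f ` Run T1"
proof -
  define s where "s n = inv_into T1 f (run_prefix R n)" for n
  have img: "run_prefix R n \<in> f ` T1" for n using R by (simp add: Run_def)
  have sT: "s n \<in> T1" for n using img by (simp add: s_def inv_into_into)
  have fs: "f (s n) = run_prefix R n" for n using img by (simp add: s_def f_inv_into_f)
  have ls: "length (s n) = n" for n
    using ch sT fs by (metis chronological_def length_run_prefix)
  have take_s: "take k (s n) = s k" if "k \<le> n" for k n
  proof -
    have "take k (s n) \<in> T1" using gt sT by (simp add: game_tree_def)
    moreover have "f (take k (s n)) = f (s k)"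
      using ch sT fs that by (simp add: chronological_def take_run_prefix min_def)
    ultimately show ?thesis using inj sT by (simp add: inj_on_def)
  qed
  define R' where "R' n = s (Suc n) ! n" for n
  have prefix_R': "run_prefix R' n = s n" for n
  proof (rule nth_equalityI)
    show "length (run_prefix R' n) = length (s n)" by (simp add: ls)
    fix i assume "i < length (run_prefix R' n)"
    hence i: "i < n" by simp
    have "s (Suc i) ! i = take (Suc i) (s n) ! i" using take_s[of "Suc i" n] i by simp
    thus "run_prefix R' n ! i = s n ! i" using i by (simp add: nth_run_prefix R'_def)
  qed
  have "R' \<in> Run T1" using prefix_R' sT by (simp add: Run_def)
  moreover have "R = fbar f R'"
    by (rule ext) (simp add: fbar_def prefix_R' fs nth_run_prefix)
  ultimately show ?thesis by blast
qed

lemma Run_image: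
  assumes "game_tree T1" and "chronological T1 T2 f" and "inj_on f T1"
  shows "Run (f ` T1) = fbar f ` Run T1"
  using Run_image_subset[OF assms] fbar_in_Run_image[OF assms(2)] by blast

lemma game_tree_image:
  assumes gt: "game_tree T1" and ch: "chronological T1 T2 f"
  shows "game_tree (f ` T1)"
  unfolding game_tree_def
proof (intro conjI ballI allI)
  fix u k assume "u \<in> f ` T1"
  then obtain t where t: "t \<in> T1" "u = f t" by blast
  have "take k t \<in> T1" using gt t by (simp add: game_tree_def)
  moreover have "f (take k t) = take k u" using ch t by (simp add: chronological_def)
  ultimately show "take k u \<in> f ` T1" by (metis image_eqI)
next
  fix u assume "u \<in> f ` T1"
  then obtain t where t: "t \<in> T1" "u = f t" by blast
  obtain x where x: "t @ [x] \<in> T1" using gt t by (auto simp: game_tree_def)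
  let ?v = "f (t @ [x])"
  have "length ?v = Suc (length t)" using ch x by (simp add: chronological_def)
  hence "?v = take (length t) ?v @ [?v ! length t]"
    by (metis lessI take_Suc_conv_app_nth take_all order_refl)
  also have "take (length t) ?v = u"
    using ch x t by (metis append_eq_conv_conj chronological_def)
  finally show "\<exists>x. u @ [x] \<in> f ` T1" using x by (metis image_eqI)
qed

lemma game_tree_Un:
  assumes "game_tree T1" and "game_tree T2"
  shows "game_tree (T1 \<union> T2)"
  using assms unfolding game_tree_def by blast

text \<open>If the prefixes of a run lay in neither tree alone, some common longer prefix would lie in
  neither, as both trees are closed under prefixes.\<close>
lemma Run_Un:
  assumes gt1: "game_tree T1" and gt2: "game_tree T2"
  shows "Run (T1 \<union> T2) = Run T1 \<union> Run T2"
proof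
  show "Run (T1 \<union> T2) \<subseteq> Run T1 \<union> Run T2"
  proof
    fix R assume R: "R \<in> Run (T1 \<union> T2)"
    show "R \<in> Run T1 \<union> Run T2"
    proof (rule ccontr)
      assume "R \<notin> Run T1 \<union> Run T2"
      then obtain n m where n: "run_prefix R n \<notin> T1" and m: "run_prefix R m \<notin> T2"
        by (auto simp: Run_def)
      have "run_prefix R (max n m) \<in> T1 \<union> T2" using R by (simp add: Run_def)
      moreover have "take n (run_prefix R (max n m)) \<notin> T1"
        and "take m (run_prefix R (max n m)) \<notin> T2"
        using n m by (simp_all add: take_run_prefix)
      ultimately show False using gt1 gt2 by (auto simp: game_tree_def)
    qed
  qed
qed (auto simp: Run_def)

lemma restrict_game_comma_obj:
  assumes "game_tree T" and "T \<subseteq> fst G" and "finite (Run T)"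
  shows "comma_obj G (restrict_game G T) id"
  using assms
  by (auto simp: comma_obj_def finite_game_def is_game_def game_emb_def chronological_def
      restrict_game_def)

lemma game_emb_restrict_game:
  assumes emb: "game_emb C G x" and img: "x ` fst C \<subseteq> T"
  shows "game_emb C (restrict_game G T) x"
proof -
  have ch: "chronological (fst C) T x"
    using emb img by (auto simp: game_emb_def chronological_def)
  have "fbar x R \<in> Run T" if "R \<in> Run (fst C)" for R
    using fbar_in_Run_image[OF ch that] img by (auto simp: Run_def)
  thus ?thesis using emb ch by (auto simp: game_emb_def restrict_game_def)
qed

lemma comma_joint_embedding:
  assumes oC: "comma_obj G C xC" and oD: "comma_obj G D xD"
  defines "T \<equiv> xC ` fst C \<union> xD ` fst D"
  shows "comma_mor G C xC (restrict_game G T) id xC \<and> comma_mor G D xD (restrict_game G T) id xD"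
proof -
  have gtC: "game_tree (fst C)" and finC: "finite (Run (fst C))"
    and injC: "inj_on xC (fst C)" and chC: "chronological (fst C) (fst G) xC"
    and embC: "game_emb C G xC"
    using oC by (auto simp: comma_obj_def finite_game_def is_game_def game_emb_def)
  have gtD: "game_tree (fst D)" and finD: "finite (Run (fst D))"
    and injD: "inj_on xD (fst D)" and chD: "chronological (fst D) (fst G) xD"
    and embD: "game_emb D G xD"
    using oD by (auto simp: comma_obj_def finite_game_def is_game_def game_emb_def)
  have gtT: "game_tree T"
    unfolding T_def using game_tree_image[OF gtC chC] game_tree_image[OF gtD chD]
    by (rule game_tree_Un)
  have "Run T = fbar xC ` Run (fst C) \<union> fbar xD ` Run (fst D)"
    unfolding T_def using game_tree_image[OF gtC chC] game_tree_image[OF gtD chD]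
    by (simp add: Run_Un Run_image[OF gtC chC injC] Run_image[OF gtD chD injD])
  hence "finite (Run T)" using finC finD by simp
  moreover have "T \<subseteq> fst G" using chC chD by (auto simp: T_def chronological_def)
  ultimately have "comma_obj G (restrict_game G T) id"
    using gtT by (simp add: restrict_game_comma_obj)
  moreover have "game_emb C (restrict_game G T) xC" "game_emb D (restrict_game G T) xD"
    using embC embD by (auto simp: T_def intro: game_emb_restrict_game)
  ultimately show ?thesis using oC oD by (simp add: comma_mor_def)
qed

theorem mainTheorem14:
  fixes G :: "'a game"
  assumes "is_game G"
  shows "(\<forall>(C :: 'b game) xC (D :: 'c game) xD.
            comma_obj G C xC \<and> comma_obj G D xD \<longrightarrow>
            (\<exists>(E :: 'a game) xE hC hD.
               comma_mor G C xC E xE hC \<and> comma_mor G D xD E xE hD))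
       \<and> (\<forall>(P :: 'd game) xP (Q :: 'e game) xQ (Q' :: 'f game) xQ' a a'.
            comma_mor G P xP Q xQ a \<and> comma_mor G P xP Q' xQ' a' \<longrightarrow>
            (\<exists>(R :: 'a game) xR b b'.
               comma_mor G Q xQ R xR b \<and> comma_mor G Q' xQ' R xR b' \<and>
               (\<forall>t\<in>fst P. b (a t) = b' (a' t))))"
proof (intro conjI allI impI)
  fix C :: "'b game" and xC and D :: "'c game" and xD
  assume "comma_obj G C xC \<and> comma_obj G D xD"
  thus "\<exists>(E :: 'a game) xE hC hD. comma_mor G C xC E xE hC \<and> comma_mor G D xD E xE hD"
    using comma_joint_embedding by blast
next
  fix P :: "'d game" and xP and Q :: "'e game" and xQ and Q' :: "'f game" and xQ' a a'
  assume mor: "comma_mor G P xP Q xQ a \<and> comma_mor G P xP Q' xQ' a'"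
  hence "comma_obj G Q xQ" "comma_obj G Q' xQ'"
    and "\<forall>t\<in>fst P. xQ (a t) = xQ' (a' t)"
    by (auto simp: comma_mor_def)
  thus "\<exists>(R :: 'a game) xR b b'. comma_mor G Q xQ R xR b \<and> comma_mor G Q' xQ' R xR b' \<and>
               (\<forall>t\<in>fst P. b (a t) = b' (a' t))"
    using comma_joint_embedding by blast
qed

end
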